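(* Let $(G,t)$ be an infinite biosphere and let $S_1,S_2\subseteq G$ be infinite specieslike clusters. If $\mathrm{gen}(S_1)\cap\mathrm{gen}(S_2)$ is infinite, then $S_1\sim S_2$, i.e., the symmetric difference $\mathrm{gen}(S_1)\triangle\mathrm{gen}(S_2)$ is finite.
   Context: An infinite biosphere is a directed graph $G$ together with a function $t$ assigning a real number $t(v)$ (the birthdate) to each vertex $v$ of $G$, such that: (1) whenever there is an edge from $v$ to $w$ ($v$ is a parent of $w$, $w$ a child of $v$), $t(v)<t(w)$; (2) for every $r\in\mathbb R$, at most finitely many vertices $v$ have $t(v)<r$; (3) every vertex has at most finitely many children; (4) $G$ has infinitely many vertices. Subsets of $G$ are sets of vertices with the induced edges. $v$ is an ancestor of $w$ (and $w$ a descendant of $v$) if there is a sequence $v=v_1,\dots,v_n=w$ with $n>1$ such that each $v_i$ is a parent of $v_{i+1}$. A set $S\subseteq G$ satisfies the identical ancestor point axiom if there is no $v\in S$ such that $S$ contains both infinitely many descendants of $v$ and infinitely many non-descendants of $v$. $S$ satisfies the convexity axiom if for every $v\in G$, if $v$ has an ancestor in $S$ and a descendant in $S$, then $v\in S$. A specieslike cluster is a subset $S\subseteq G$ that is connected (as an undirected graph, with the induced edges), satisfies the identical ancestor point axiom, and satisfies the convexity axiom. A vertex $v\in S$ is a generator of $S$ if $S$ contains at most finitely many non-descendants of $v$; $\mathrm{gen}(S)$ is the set of generators of $S$. For infinite $S_1,S_2\subseteq G$, $S_1\sim S_2$ means $\mathrm{gen}(S_1)\triangle\mathrm{gen}(S_2)$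 is finite. *)

theory Defs
  imports Complex_Main
begin

text \<open>A directed graph with vertex set V and edge relation E (E v w: v is a parent of w),
  together with birthdates t.\<close>

definition infinite_biosphere :: "'v set \<Rightarrow> ('v \<Rightarrow> 'v \<Rightarrow> bool) \<Rightarrow> ('v \<Rightarrow> real) \<Rightarrow> bool" where
  "infinite_biosphere V E t \<longleftrightarrow>
     (\<forall>v w. E v w \<longrightarrow> v \<in> V \<and> w \<in> V) \<and>
     (\<forall>v w. E v w \<longrightarrow> t v < t w) \<and>
     (\<forall>r::real. finite {v \<in> V. t v < r}) \<and>
     (\<forall>v \<in> V. finite {w. E v w}) \<and>
     infinite V"

definition ancestor :: "('v \<Rightarrow> 'v \<Rightarrow> bool) \<Rightarrow> 'v \<Rightarrow> 'v \<Rightarrow> bool" where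
  "ancestor E v w \<longleftrightarrow> E\<^sup>+\<^sup>+ v w"

definition descendants :: "('v \<Rightarrow> 'v \<Rightarrow> bool) \<Rightarrow> 'v \<Rightarrow> 'v set" where
  "descendants E v = {w. ancestor E v w}"

definition connected_in :: "('v \<Rightarrow> 'v \<Rightarrow> bool) \<Rightarrow> 'v set \<Rightarrow> bool" where
  "connected_in E S \<longleftrightarrow>
     (\<forall>x \<in> S. \<forall>y \<in> S. (\<lambda>a b. a \<in> S \<and> b \<in> S \<and> (E a b \<or> E b a))\<^sup>*\<^sup>* x y)"

definition identical_ancestor_point_axiom :: "('v \<Rightarrow> 'v \<Rightarrow> bool) \<Rightarrow> 'v set \<Rightarrow> bool" where
  "identical_ancestor_point_axiom E S \<longleftrightarrow>
     \<not> (\<exists>v \<in> S. infinite (S \<inter> descendants E v) \<and> infinite (S - descendants E v))"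

definition convexity_axiom :: "'v set \<Rightarrow> ('v \<Rightarrow> 'v \<Rightarrow> bool) \<Rightarrow> 'v set \<Rightarrow> bool" where
  "convexity_axiom V E S \<longleftrightarrow>
     (\<forall>v \<in> V. (\<exists>a \<in> S. ancestor E a v) \<and> (\<exists>d \<in> S. ancestor E v d) \<longrightarrow> v \<in> S)"

definition specieslike_cluster :: "'v set \<Rightarrow> ('v \<Rightarrow> 'v \<Rightarrow> bool) \<Rightarrow> 'v set \<Rightarrow> bool" where
  "specieslike_cluster V E S \<longleftrightarrow>
     S \<subseteq> V \<and> connected_in E S \<and> identical_ancestor_point_axiom E S \<and> convexity_axiom V E S"

definition gen :: "('v \<Rightarrow> 'v \<Rightarrow> bool) \<Rightarrow> 'v set \<Rightarrow> 'v set" where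
  "gen E S = {v \<in> S. finite (S - descendants E v)}"

definition cluster_equiv :: "('v \<Rightarrow> 'v \<Rightarrow> bool) \<Rightarrow> 'v set \<Rightarrow> 'v set \<Rightarrow> bool" where
  "cluster_equiv E S1 S2 \<longleftrightarrow> finite ((gen E S1 - gen E S2) \<union> (gen E S2 - gen E S1))"

end

theory Submission
  imports Defs
begin

text \<open>Fix a common generator \<open>w\<close>. A generator \<open>x\<close> of \<open>S\<^sub>1\<close> below \<open>w\<close> has all but finitely
  many vertices of the infinite set \<open>S\<^sub>1 \<inter> S\<^sub>2\<close> among its descendants. Convexity of \<open>S\<^sub>2\<close>,
  applied between \<open>w\<close> and one of them, puts \<open>x\<close> into \<open>S\<^sub>2\<close>, and then the identical ancestor point
  axiom makes \<open>x\<close> a generator of \<open>S\<^sub>2\<close>. So every generator of \<open>S\<^sub>1\<close> that is not one of \<open>S\<^sub>2\<close>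
  is a non-descendant of \<open>w\<close> in \<open>S\<^sub>1\<close>, and there are only finitely many of these.\<close>

lemma gen_subset: "gen E S \<subseteq> S"
  by (auto simp: gen_def)

lemma gen_descendant_in_gen:
  assumes "S\<^sub>1 \<subseteq> V" and "convexity_axiom V E S\<^sub>2" and "identical_ancestor_point_axiom E S\<^sub>2"
    and "infinite (S\<^sub>1 \<inter> S\<^sub>2)" and "w \<in> S\<^sub>2" and "x \<in> gen E S\<^sub>1" and "x \<in> descendants E w"
  shows "x \<in> gen E S\<^sub>2"
proof -
  have x: "x \<in> S\<^sub>1" "finite (S\<^sub>1 - descendants E x)"
    using \<open>x \<in> gen E S\<^sub>1\<close> by (auto simp: gen_def)
  have "infinite (S\<^sub>1 \<inter> S\<^sub>2 - (S\<^sub>1 - descendants E x))"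
    using \<open>infinite (S\<^sub>1 \<inter> S\<^sub>2)\<close> x(2) by (rule Diff_infinite_finite[rotated])
  then have below_x: "infinite (S\<^sub>2 \<inter> descendants E x)"
    by (rule infinite_super[rotated]) blast
  then obtain d where "d \<in> S\<^sub>2" "ancestor E x d"
    by (auto dest!: infinite_imp_nonempty simp: descendants_def)
  then have "x \<in> S\<^sub>2"
    using assms(1,2,5,7) x(1) unfolding convexity_axiom_def descendants_def by blast
  with below_x assms(3) show ?thesis
    unfolding identical_ancestor_point_axiom_def gen_def by blast
qed

lemma finite_gen_diff:
  assumes "S\<^sub>1 \<subseteq> V" and "convexity_axiom V E S\<^sub>2" and "identical_ancestor_point_axiom E S\<^sub>2"
    and "infinite (S\<^sub>1 \<inter> S\<^sub>2)" and "w \<in> gen E S\<^sub>1" and "w \<in> S\<^sub>2"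
  shows "finite (gen E S\<^sub>1 - gen E S\<^sub>2)"
proof (rule finite_subset)
  show "gen E S\<^sub>1 - gen E S\<^sub>2 \<subseteq> S\<^sub>1 - descendants E w"
  proof
    fix x
    assume "x \<in> gen E S\<^sub>1 - gen E S\<^sub>2"
    then show "x \<in> S\<^sub>1 - descendants E w"
      using gen_descendant_in_gen[OF assms(1-4,6), of x] gen_subset[of E "S\<^sub>1"] by blast
  qed
  show "finite (S\<^sub>1 - descendants E w)"
    using \<open>w \<in> gen E S\<^sub>1\<close> by (simp add: gen_def)
qed

theorem mainTheorem2:
  fixes V :: "'v set" and E :: "'v \<Rightarrow> 'v \<Rightarrow> bool" and t :: "'v \<Rightarrow> real"
    and S1 S2 :: "'v set"
  assumes "infinite_biosphere V E t"
    and "specieslike_cluster V E S1" and "infinite S1"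
    and "specieslike_cluster V E S2" and "infinite S2"
    and "infinite (gen E S1 \<inter> gen E S2)"
  shows "cluster_equiv E S1 S2"
proof -
  obtain w where w: "w \<in> gen E S1" "w \<in> gen E S2"
    using infinite_imp_nonempty[OF assms(6)] by blast
  have "infinite (S1 \<inter> S2)"
    using assms(6) by (rule infinite_super[rotated]) (intro Int_mono gen_subset)
  moreover have "w \<in> S1" "w \<in> S2"
    using w by (auto dest: subsetD[OF gen_subset])
  moreover have "S1 \<subseteq> V" "convexity_axiom V E S1" "identical_ancestor_point_axiom E S1"
    "S2 \<subseteq> V" "convexity_axiom V E S2" "identical_ancestor_point_axiom E S2"
    using assms(2,4) unfolding specieslike_cluster_def by blast+
  ultimately have "finite (gen E S1 - gen E S2)" "finite (gen E S2 - gen E S1)"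
    using w finite_gen_diff[of S1 V E S2 w] finite_gen_diff[of S2 V E S1 w]
    by (simp_all add: Int_commute)
  then show ?thesis
    unfolding cluster_equiv_def by simp
qed

end
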